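(* Let $(P,\omega)$ be a labeled poset with $|P|=p$ and let $s\in P$. A function $f:P\to\mathbb{N}$ is a $(P,\omega;s)$-partition if and only if $f'$ is $w$-compatible for some $w\in\mathcal{L}(P,\omega;s)$. In other words, $$\mathcal{A}(P,\omega;s)=\dot\bigcup_{w\in\mathcal{L}(P,\omega;s)} S_w,$$ a disjoint union.
   Context: $\mathbb{N}=\{0,1,2,\dots\}$. A labeling is a bijection $\omega:P\to[p]$. A linear extension is an order-preserving bijection $g:P\to[p]$; $\mathcal{L}(P,\omega)$ is the set of words (permutations) $w=\omega\circ g^{-1}=w_1\cdots w_p$ over all linear extensions $g$, and $\mathcal{L}(P,\omega;s)$ is the set of those $w\in\mathcal{L}(P,\omega)$ with $w_p=\omega(s)$. A $(P,\omega)$-partition is a map $f:P\to\mathbb{N}$ such that $f(x)\ge f(y)$ whenever $x\le y$, and $f(x)>f(y)$ whenever $x\le y$ and $\omega(x)>\omega(y)$. A $(P,\omega;s)$-partition is a $(P,\omega)$-partition $f$ such that $f(s)\le f(t)$ for all $t\in P$, and such that $f(s)=f(t)$ for $t\neq s$ implies $\omega(s)>\omega(t)$; $\mathcal{A}(P,\omega;s)$ is the set of these. For $f:P\to\mathbb{N}$ set $f'=f\circ\omega^{-1}:[p]\to\mathbb{N}$. For a permutation $w=w_1\cdots w_p$, a function $f':[p]\to\mathbb{N}$ is $w$-compatible if $f'(w_1)\ge\cdots\ge f'(w_p)$ and $f'(w_i)>f'(w_{i+1})$ whenever $w_i>w_{i+1}$. $S_w$ is the set of all $f:P\to\mathbb{N}$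 such that $f'$ is $w$-compatible. *)

theory Defs
  imports Main
begin

definition poset_on :: "'a set \<Rightarrow> ('a \<Rightarrow> 'a \<Rightarrow> bool) \<Rightarrow> bool" where
  "poset_on P le \<longleftrightarrow> (\<forall>x\<in>P. le x x) \<and>
     (\<forall>x\<in>P. \<forall>y\<in>P. le x y \<and> le y x \<longrightarrow> x = y) \<and>
     (\<forall>x\<in>P. \<forall>y\<in>P. \<forall>z\<in>P. le x y \<and> le y z \<longrightarrow> le x z)"

definition labeling :: "'a set \<Rightarrow> ('a \<Rightarrow> nat) \<Rightarrow> bool" where
  "labeling P \<omega> \<longleftrightarrow> bij_betw \<omega> P {1..card P}"

definition linear_extension :: "'a set \<Rightarrow> ('a \<Rightarrow> 'a \<Rightarrow> bool) \<Rightarrow> ('a \<Rightarrow> nat) \<Rightarrow> bool" where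
  "linear_extension P le g \<longleftrightarrow> bij_betw g P {1..card P} \<and>
     (\<forall>x\<in>P. \<forall>y\<in>P. le x y \<longrightarrow> g x \<le> g y)"

text \<open>The word w = omega o g^{-1} = w_1 ... w_p, as a list (w_i is the (i-1)-th list entry).\<close>
definition word_of :: "'a set \<Rightarrow> ('a \<Rightarrow> nat) \<Rightarrow> ('a \<Rightarrow> nat) \<Rightarrow> nat list" where
  "word_of P \<omega> g = map (\<lambda>i. \<omega> (the_inv_into P g i)) [1..<card P + 1]"

definition lin_words :: "'a set \<Rightarrow> ('a \<Rightarrow> 'a \<Rightarrow> bool) \<Rightarrow> ('a \<Rightarrow> nat) \<Rightarrow> nat list set" where
  "lin_words P le \<omega> = {word_of P \<omega> g | g. linear_extension P le g}"

definition lin_words_s :: "'a set \<Rightarrow> ('a \<Rightarrow> 'a \<Rightarrow> bool) \<Rightarrow> ('a \<Rightarrow> nat) \<Rightarrow> 'a \<Rightarrow> nat list set" where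
  "lin_words_s P le \<omega> s = {w \<in> lin_words P le \<omega>. w \<noteq> [] \<and> last w = \<omega> s}"

definition P_partition :: "'a set \<Rightarrow> ('a \<Rightarrow> 'a \<Rightarrow> bool) \<Rightarrow> ('a \<Rightarrow> nat) \<Rightarrow> ('a \<Rightarrow> nat) \<Rightarrow> bool" where
  "P_partition P le \<omega> f \<longleftrightarrow>
     (\<forall>x\<in>P. \<forall>y\<in>P. le x y \<longrightarrow> f x \<ge> f y \<and> (\<omega> x > \<omega> y \<longrightarrow> f x > f y))"

definition Ps_partition :: "'a set \<Rightarrow> ('a \<Rightarrow> 'a \<Rightarrow> bool) \<Rightarrow> ('a \<Rightarrow> nat) \<Rightarrow> 'a \<Rightarrow> ('a \<Rightarrow> nat) \<Rightarrow> bool" where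
  "Ps_partition P le \<omega> s f \<longleftrightarrow> P_partition P le \<omega> f \<and>
     (\<forall>t\<in>P. f s \<le> f t) \<and>
     (\<forall>t\<in>P. t \<noteq> s \<and> f s = f t \<longrightarrow> \<omega> s > \<omega> t)"

text \<open>A(P,omega;s). Functions are total on 'a; only values on P matter.\<close>
definition A_set :: "'a set \<Rightarrow> ('a \<Rightarrow> 'a \<Rightarrow> bool) \<Rightarrow> ('a \<Rightarrow> nat) \<Rightarrow> 'a \<Rightarrow> ('a \<Rightarrow> nat) set" where
  "A_set P le \<omega> s = {f. Ps_partition P le \<omega> s f}"

definition w_compatible :: "nat list \<Rightarrow> (nat \<Rightarrow> nat) \<Rightarrow> bool" where
  "w_compatible w f' \<longleftrightarrow> (\<forall>i. i + 1 < length w \<longrightarrow>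
      f' (w ! i) \<ge> f' (w ! (i + 1)) \<and>
      (w ! i > w ! (i + 1) \<longrightarrow> f' (w ! i) > f' (w ! (i + 1))))"

definition S_w :: "'a set \<Rightarrow> ('a \<Rightarrow> nat) \<Rightarrow> nat list \<Rightarrow> ('a \<Rightarrow> nat) set" where
  "S_w P \<omega> w = {f. w_compatible w (f \<circ> the_inv_into P \<omega>)}"

end

theory Submission
  imports Defs "HOL-Library.Product_Lexorder"
begin

text \<open>List the elements of P by decreasing value of f, breaking ties by increasing
label. Since the labeling is injective this order is strict and total, so each f determines
exactly one such list. Writing w for the word of labels of a list, f' is w-compatible exactly
when the list is this one; f is a (P,\<omega>)-partition exactly when the list is a linear
extension, and the two extra conditions of a (P,\<omega>;s)-partition say exactly that s comes
last. Hence A(P,\<omega>;s) is the union of the S_w, and the union is disjoint because the list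
determined by f is unique.\<close>

text \<open>A linear extension g is encoded by the list g^-1(1), ..., g^-1(p): no element lies below
an element listed before it.\<close>

definition linear_extension_list :: "'a set \<Rightarrow> ('a \<Rightarrow> 'a \<Rightarrow> bool) \<Rightarrow> 'a list \<Rightarrow> bool" where
  "linear_extension_list P le xs \<longleftrightarrow>
     distinct xs \<and> set xs = P \<and> sorted_wrt (\<lambda>x y. \<not> le y x) xs"

lemma linear_extension_list_of_linear_extension:
  assumes "linear_extension P le g"
  shows "linear_extension_list P le (map (the_inv_into P g) [1..<card P + 1])"
proof -
  let ?h = "the_inv_into P g"
  have bij: "bij_betw g P {1..card P}" and mono: "\<And>x y. x \<in> P \<Longrightarrow> y \<in> P \<Longrightarrow> le x y \<Longrightarrow> g x \<le> g y"
    using assms unfolding linear_extension_def by blast+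
  have upt_set: "set [1..<card P + 1] = {1..card P}" by auto
  have bij_h: "bij_betw ?h {1..card P} P" by (rule bij_betw_the_inv_into[OF bij])
  have g_h: "g (?h i) = i" if "i \<in> {1..card P}" for i
    using f_the_inv_into_f_bij_betw[OF bij that] .
  have "sorted_wrt (\<lambda>i j. \<not> le (?h j) (?h i)) [1..<card P + 1]"
  proof (rule sorted_wrt_mono_rel[OF _ sorted_wrt_upt])
    fix i j assume ij: "i \<in> set [1..<card P + 1]" "j \<in> set [1..<card P + 1]" "i < j"
    show "\<not> le (?h j) (?h i)"
    proof
      assume "le (?h j) (?h i)"
      then have "g (?h j) \<le> g (?h i)"
        using mono bij_betwE[OF bij_h] ij(1,2) upt_set by auto
      then show False using g_h ij upt_set by auto
    qed
  qed
  moreover have "distinct (map ?h [1..<card P + 1])"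
    using bij_h upt_set by (simp add: distinct_map bij_betw_def)
  moreover have "set (map ?h [1..<card P + 1]) = P"
    using bij_h upt_set by (simp add: bij_betw_def)
  ultimately show ?thesis
    unfolding linear_extension_list_def by (simp add: sorted_wrt_map)
qed

lemma linear_extension_of_linear_extension_list:
  assumes "linear_extension_list P le xs"
  shows "\<exists>g. linear_extension P le g \<and> map (the_inv_into P g) [1..<card P + 1] = xs"
proof -
  have dist: "distinct xs" and set_xs: "set xs = P" and sorted: "sorted_wrt (\<lambda>x y. \<not> le y x) xs"
    using assms unfolding linear_extension_list_def by auto
  have card: "card P = length xs" using dist set_xs distinct_card by blast
  have bij_nth: "bij_betw ((!) xs) {..<length xs} P" using bij_betw_nth[OF dist refl set_xs[symmetric]] .
  define pos where "pos = the_inv_into {..<length xs} ((!) xs)"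
  define g where "g = (\<lambda>x. Suc (pos x))"
  have pos_nth: "pos (xs ! i) = i" if "i < length xs" for i
    unfolding pos_def using that bij_nth by (simp add: bij_betw_def the_inv_into_f_f)
  have bij_g: "bij_betw g P {1..card P}"
  proof -
    have "bij_betw pos P {..<length xs}" unfolding pos_def by (rule bij_betw_the_inv_into[OF bij_nth])
    moreover have "bij_betw Suc {..<length xs} {1..length xs}"
      by (simp add: bij_betw_def image_Suc_lessThan)
    ultimately have "bij_betw (Suc \<circ> pos) P {1..length xs}" by (rule bij_betw_trans)
    then show ?thesis unfolding card by (simp add: g_def comp_def)
  qed
  moreover have "g x \<le> g y" if xy: "x \<in> P" "y \<in> P" "le x y" for x y
  proof -
    obtain i j where "i < length xs" "j < length xs" "x = xs ! i" "y = xs ! j"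
      using xy(1,2) set_xs by (metis in_set_conv_nth)
    moreover have "\<not> j < i" using sorted_wrt_nth_less[OF sorted] xy(3) calculation by blast
    ultimately show ?thesis unfolding g_def using pos_nth by auto
  qed
  moreover have "map (the_inv_into P g) [1..<card P + 1] = xs"
  proof (rule nth_equalityI)
    fix i assume "i < length (map (the_inv_into P g) [1..<card P + 1])"
    then have i: "i < length xs" using card by (simp del: upt_Suc)
    have "g (xs ! i) = Suc i" unfolding g_def using pos_nth[OF i] by simp
    then have "the_inv_into P g (Suc i) = xs ! i"
      using bij_g i set_xs by (metis bij_betw_def nth_mem the_inv_into_f_f)
    then show "map (the_inv_into P g) [1..<card P + 1] ! i = xs ! i"
      using i card by (simp del: upt_Suc add: nth_upt)
  qed (simp del: upt_Suc add: card)
  ultimately show ?thesis unfolding linear_extension_def by blast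
qed

lemma lin_words_iff:
  "w \<in> lin_words P le \<omega> \<longleftrightarrow> (\<exists>xs. linear_extension_list P le xs \<and> w = map \<omega> xs)"
proof -
  have word: "word_of P \<omega> g = map \<omega> (map (the_inv_into P g) [1..<card P + 1])" for g
    unfolding word_of_def by simp
  show ?thesis
  proof
    assume "w \<in> lin_words P le \<omega>"
    then obtain g where "linear_extension P le g" "w = word_of P \<omega> g"
      unfolding lin_words_def by blast
    then show "\<exists>xs. linear_extension_list P le xs \<and> w = map \<omega> xs"
      using linear_extension_list_of_linear_extension word by blast
  next
    assume "\<exists>xs. linear_extension_list P le xs \<and> w = map \<omega> xs"
    then obtain xs where "linear_extension_list P le xs" "w = map \<omega> xs" by blast
    then obtain g where "linear_extension P le g" "w = word_of P \<omega> g"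
      using linear_extension_of_linear_extension_list word by metis
    then show "w \<in> lin_words P le \<omega>" unfolding lin_words_def by blast
  qed
qed

lemma lin_words_s_iff:
  assumes "inj_on \<omega> P" and "s \<in> P"
  shows "w \<in> lin_words_s P le \<omega> s \<longleftrightarrow>
    (\<exists>xs. linear_extension_list P le xs \<and> xs \<noteq> [] \<and> last xs = s \<and> w = map \<omega> xs)"
proof -
  have "last xs = s \<longleftrightarrow> \<omega> (last xs) = \<omega> s" if "linear_extension_list P le xs" "xs \<noteq> []" for xs
    using that assms inj_on_eq_iff[OF assms(1)] unfolding linear_extension_list_def by auto
  then show ?thesis
    unfolding lin_words_s_def lin_words_iff by (auto simp: last_map)
qed

lemma sorted_wrt_common_order:
  assumes "sorted_wrt R xs" and "sorted_wrt Q xs"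
    and "x \<in> set xs" and "y \<in> set xs" and "x \<noteq> y"
  shows "(R x y \<and> Q x y) \<or> (R y x \<and> Q y x)"
proof -
  obtain i j where ij: "i < length xs" "j < length xs" "x = xs ! i" "y = xs ! j"
    using assms(3,4) by (metis in_set_conv_nth)
  then have "i < j \<or> j < i" using assms(5) by (metis linorder_neqE_nat)
  then show ?thesis using sorted_wrt_nth_less[OF assms(1)] sorted_wrt_nth_less[OF assms(2)] ij by blast
qed

lemma sorted_wrt_last:
  assumes "sorted_wrt R xs" and "x \<in> set xs" and "x \<noteq> last xs"
  shows "R x (last xs)"
  using assms by (cases xs rule: rev_cases) (auto simp: sorted_wrt_append)

lemma linear_extension_list_iff_mono:
  fixes k :: "'a \<Rightarrow> 'b::order"
  assumes "distinct xs" and set_xs: "set xs = P" and "sorted_wrt (<) (map k xs)"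
  shows "linear_extension_list P le xs \<longleftrightarrow> (\<forall>x\<in>P. \<forall>y\<in>P. x \<noteq> y \<longrightarrow> le x y \<longrightarrow> k x < k y)"
proof -
  have sorted_k: "sorted_wrt (\<lambda>x y. k x < k y) xs" using assms(3) by (simp add: sorted_wrt_map)
  show ?thesis
  proof
    assume "linear_extension_list P le xs"
    then have sorted_le: "sorted_wrt (\<lambda>x y. \<not> le y x) xs" unfolding linear_extension_list_def by blast
    show "\<forall>x\<in>P. \<forall>y\<in>P. x \<noteq> y \<longrightarrow> le x y \<longrightarrow> k x < k y"
    proof (intro ballI impI)
      fix x y assume "x \<in> P" "y \<in> P" "x \<noteq> y" "le x y"
      then show "k x < k y"
        using sorted_wrt_common_order[OF sorted_k sorted_le, of x y] set_xs by blast
    qed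
  next
    assume mono: "\<forall>x\<in>P. \<forall>y\<in>P. x \<noteq> y \<longrightarrow> le x y \<longrightarrow> k x < k y"
    have "sorted_wrt (\<lambda>x y. \<not> le y x) xs"
    proof (rule sorted_wrt_mono_rel[OF _ sorted_k])
      fix x y assume xy: "x \<in> set xs" "y \<in> set xs" "k x < k y"
      show "\<not> le y x"
      proof
        assume "le y x"
        moreover have "y \<noteq> x" using xy(3) by auto
        ultimately have "k y < k x" using mono xy(1,2) set_xs by blast
        then show False using xy(3) by simp
      qed
    qed
    then show "linear_extension_list P le xs" unfolding linear_extension_list_def using assms by blast
  qed
qed

lemma last_eq_iff_greatest:
  fixes k :: "'a \<Rightarrow> 'b::order"
  assumes set_xs: "set xs = P" and "s \<in> P" and "sorted_wrt (<) (map k xs)"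
  shows "last xs = s \<longleftrightarrow> (\<forall>t\<in>P. t \<noteq> s \<longrightarrow> k t < k s)"
proof -
  have "sorted_wrt (\<lambda>x y. k x < k y) xs" using assms(3) by (simp add: sorted_wrt_map)
  from sorted_wrt_last[OF this] have below_last: "k t < k (last xs)" if "t \<in> P" "t \<noteq> last xs" for t
    using that set_xs by blast
  have "xs \<noteq> []" using set_xs assms(2) by auto
  then have last_in: "last xs \<in> P" using set_xs last_in_set by blast
  show ?thesis
  proof
    assume "last xs = s"
    then show "\<forall>t\<in>P. t \<noteq> s \<longrightarrow> k t < k s" using below_last by blast
  next
    assume greatest: "\<forall>t\<in>P. t \<noteq> s \<longrightarrow> k t < k s"
    show "last xs = s"
    proof (rule ccontr)
      assume "last xs \<noteq> s"
      then have "k s < k (last xs)" and "k (last xs) < k s"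
        using below_last[OF assms(2)] greatest last_in by auto
      then show False by simp
    qed
  qed
qed

lemma strict_sorted_list_exists:
  fixes k :: "'a \<Rightarrow> 'b::linorder"
  assumes "finite P" and "inj_on k P"
  obtains xs where "distinct xs" "set xs = P" "sorted_wrt (<) (map k xs)"
proof -
  interpret folding_insort_key "(\<le>)" "(<)" P k by unfold_locales (rule assms(2))
  obtain xs where xs: "sorted_wrt (<) (map k xs)" "set xs = P" "length xs = card P"
    using finite_set_strict_sorted[OF order_refl assms(1)] by blast
  then have "distinct xs" using assms(1) by (simp add: card_distinct)
  with xs that show ?thesis by blast
qed

lemma strict_sorted_list_unique:
  fixes k :: "'a \<Rightarrow> 'b::linorder"
  assumes "inj_on k P" and "set xs = P" and "set ys = P"
    and "sorted_wrt (<) (map k xs)" and "sorted_wrt (<) (map k ys)"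
  shows "xs = ys"
proof -
  have "map k xs = map k ys" using assms(2-5) by (intro strict_sorted_equal) auto
  then show ?thesis using map_inj_on[of k xs ys] assms(1-3) by simp
qed

definition partition_key :: "('a \<Rightarrow> nat) \<Rightarrow> ('a \<Rightarrow> nat) \<Rightarrow> 'a \<Rightarrow> int \<times> nat" where
  "partition_key f \<omega> x = (- int (f x), \<omega> x)"

lemma partition_key_less_iff:
  "partition_key f \<omega> x < partition_key f \<omega> y \<longleftrightarrow> f y < f x \<or> (f x = f y \<and> \<omega> x < \<omega> y)"
  unfolding partition_key_def by (auto simp: less_prod_def')

lemma inj_on_partition_key: "inj_on \<omega> P \<Longrightarrow> inj_on (partition_key f \<omega>) P"
  unfolding partition_key_def inj_on_def by auto

lemma S_w_map_iff_sorted: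
  assumes inj: "inj_on \<omega> P" and "distinct xs" and set_xs: "set xs = P"
  shows "f \<in> S_w P \<omega> (map \<omega> xs) \<longleftrightarrow> sorted_wrt (<) (map (partition_key f \<omega>) xs)"
proof -
  let ?k = "partition_key f \<omega>"
  have in_P: "xs ! i \<in> P" if "i < length xs" for i using that set_xs by auto
  have f_label: "(f \<circ> the_inv_into P \<omega>) (\<omega> (xs ! i)) = f (xs ! i)" if "i < length xs" for i
    using in_P[OF that] inj by (simp add: the_inv_into_f_f)
  have labels_differ: "\<omega> (xs ! i) \<noteq> \<omega> (xs ! Suc i)" if "Suc i < length xs" for i
    using inj_on_eq_iff[OF inj in_P in_P] that assms(2) nth_eq_iff_index_eq by fastforce
  have "f \<in> S_w P \<omega> (map \<omega> xs) \<longleftrightarrow> (\<forall>i. Suc i < length xs \<longrightarrow>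
      f (xs ! Suc i) \<le> f (xs ! i) \<and> (\<omega> (xs ! Suc i) < \<omega> (xs ! i) \<longrightarrow> f (xs ! Suc i) < f (xs ! i)))"
    unfolding S_w_def w_compatible_def using f_label by (auto simp del: comp_apply)
  also have "\<dots> \<longleftrightarrow> (\<forall>i. Suc i < length xs \<longrightarrow> ?k (xs ! i) < ?k (xs ! Suc i))"
    unfolding partition_key_less_iff by (intro iff_allI imp_cong[OF refl]) (drule labels_differ, auto)
  also have "\<dots> \<longleftrightarrow> sorted_wrt (<) (map ?k xs)"
    by (simp add: sorted_wrt_iff_nth_Suc_transp[OF transp_on_less])
  finally show ?thesis .
qed

lemma P_partition_iff_partition_key_mono:
  assumes "inj_on \<omega> P"
  shows "P_partition P le \<omega> f \<longleftrightarrow>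
    (\<forall>x\<in>P. \<forall>y\<in>P. x \<noteq> y \<longrightarrow> le x y \<longrightarrow> partition_key f \<omega> x < partition_key f \<omega> y)"
proof -
  have "(le x y \<longrightarrow> f y \<le> f x \<and> (\<omega> y < \<omega> x \<longrightarrow> f y < f x)) \<longleftrightarrow>
      (x \<noteq> y \<longrightarrow> le x y \<longrightarrow> f y < f x \<or> f x = f y \<and> \<omega> x < \<omega> y)" if "x \<in> P" "y \<in> P" for x y
    using inj_on_eq_iff[OF assms that] by auto
  then show ?thesis unfolding P_partition_def partition_key_less_iff by blast
qed

lemma Ps_partition_iff_partition_key_greatest:
  "Ps_partition P le \<omega> s f \<longleftrightarrow>
    P_partition P le \<omega> f \<and> (\<forall>t\<in>P. t \<noteq> s \<longrightarrow> partition_key f \<omega> t < partition_key f \<omega> s)"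
  unfolding Ps_partition_def partition_key_less_iff by force

lemma Ps_partition_iff_sorted_linear_extension_list:
  assumes "finite P" and inj: "inj_on \<omega> P" and "s \<in> P"
  shows "Ps_partition P le \<omega> s f \<longleftrightarrow> (\<exists>xs. linear_extension_list P le xs \<and> xs \<noteq> [] \<and>
    last xs = s \<and> sorted_wrt (<) (map (partition_key f \<omega>) xs))"
proof -
  let ?k = "partition_key f \<omega>"
  obtain ys where ys: "distinct ys" "set ys = P" "sorted_wrt (<) (map ?k ys)"
    using strict_sorted_list_exists[OF assms(1) inj_on_partition_key[OF inj]] .
  have "Ps_partition P le \<omega> s f \<longleftrightarrow> linear_extension_list P le ys \<and> last ys = s"
    unfolding Ps_partition_iff_partition_key_greatest P_partition_iff_partition_key_mono[OF inj]
      linear_extension_list_iff_mono[OF ys] last_eq_iff_greatest[OF ys(2) assms(3) ys(3)] ..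
  also have "\<dots> \<longleftrightarrow> (\<exists>xs. linear_extension_list P le xs \<and> xs \<noteq> [] \<and> last xs = s \<and> sorted_wrt (<) (map ?k xs))"
  proof
    assume "linear_extension_list P le ys \<and> last ys = s"
    moreover have "ys \<noteq> []" using ys(2) assms(3) by auto
    ultimately show "\<exists>xs. linear_extension_list P le xs \<and> xs \<noteq> [] \<and> last xs = s \<and> sorted_wrt (<) (map ?k xs)"
      using ys(3) by blast
  next
    assume "\<exists>xs. linear_extension_list P le xs \<and> xs \<noteq> [] \<and> last xs = s \<and> sorted_wrt (<) (map ?k xs)"
    then obtain xs where xs: "linear_extension_list P le xs" "last xs = s" "sorted_wrt (<) (map ?k xs)"
      by blast
    then have "xs = ys"
      using strict_sorted_list_unique[OF inj_on_partition_key[OF inj] _ ys(2)] ys(3)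
      unfolding linear_extension_list_def by blast
    then show "linear_extension_list P le ys \<and> last ys = s" using xs by simp
  qed
  finally show ?thesis .
qed

lemma S_w_map_linear_extension_list_iff:
  assumes "inj_on \<omega> P" and "linear_extension_list P le xs"
  shows "f \<in> S_w P \<omega> (map \<omega> xs) \<longleftrightarrow> sorted_wrt (<) (map (partition_key f \<omega>) xs)"
  using S_w_map_iff_sorted[OF assms(1)] assms(2) unfolding linear_extension_list_def by blast

lemma A_set_iff_S_w:
  assumes "finite P" and inj: "inj_on \<omega> P" and "s \<in> P"
  shows "f \<in> A_set P le \<omega> s \<longleftrightarrow> (\<exists>w\<in>lin_words_s P le \<omega> s. f \<in> S_w P \<omega> w)"
proof -
  have "f \<in> A_set P le \<omega> s \<longleftrightarrow>
      (\<exists>xs. linear_extension_list P le xs \<and> xs \<noteq> [] \<and> last xs = s \<and> f \<in> S_w P \<omega> (map \<omega> xs))"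
    unfolding A_set_def mem_Collect_eq Ps_partition_iff_sorted_linear_extension_list[OF assms]
    using S_w_map_linear_extension_list_iff[OF inj] by (intro ex_cong1) blast
  also have "\<dots> \<longleftrightarrow> (\<exists>w\<in>lin_words_s P le \<omega> s. f \<in> S_w P \<omega> w)"
    unfolding Bex_def lin_words_s_iff[OF inj assms(3)] by blast
  finally show ?thesis .
qed

lemma S_w_lin_words_unique:
  assumes inj: "inj_on \<omega> P" and "w \<in> lin_words P le \<omega>" and "v \<in> lin_words P le \<omega>"
    and "f \<in> S_w P \<omega> w" and "f \<in> S_w P \<omega> v"
  shows "w = v"
proof -
  obtain xs ys where xs: "linear_extension_list P le xs" "w = map \<omega> xs"
    and ys: "linear_extension_list P le ys" "v = map \<omega> ys"
    using assms(2,3) unfolding lin_words_iff by blast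
  have "sorted_wrt (<) (map (partition_key f \<omega>) xs)" "sorted_wrt (<) (map (partition_key f \<omega>) ys)"
    using S_w_map_linear_extension_list_iff[OF inj] xs ys assms(4,5) by simp_all
  then have "xs = ys"
    using strict_sorted_list_unique[OF inj_on_partition_key[OF inj]] xs(1) ys(1)
    unfolding linear_extension_list_def by blast
  then show ?thesis using xs(2) ys(2) by simp
qed

theorem lemma3p2:
  fixes P :: "'a set" and le :: "'a \<Rightarrow> 'a \<Rightarrow> bool" and \<omega> :: "'a \<Rightarrow> nat" and s :: 'a
  assumes "finite P" and "poset_on P le" and "labeling P \<omega>" and "s \<in> P"
  shows "A_set P le \<omega> s = (\<Union>w\<in>lin_words_s P le \<omega> s. S_w P \<omega> w)
     \<and> (\<forall>w\<in>lin_words_s P le \<omega> s. \<forall>v\<in>lin_words_s P le \<omega> s. w \<noteq> v \<longrightarrow> S_w P \<omega> w \<inter> S_w P \<omega> v = {})"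
proof -
  have inj: "inj_on \<omega> P" using assms(3) unfolding labeling_def bij_betw_def by blast
  have "A_set P le \<omega> s = (\<Union>w\<in>lin_words_s P le \<omega> s. S_w P \<omega> w)"
    using A_set_iff_S_w[OF assms(1) inj assms(4)] by blast
  moreover have "S_w P \<omega> w \<inter> S_w P \<omega> v = {}"
    if "w \<in> lin_words_s P le \<omega> s" "v \<in> lin_words_s P le \<omega> s" "w \<noteq> v" for w v
    using S_w_lin_words_unique[OF inj] that unfolding lin_words_s_def by blast
  ultimately show ?thesis by blast
qed

end
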